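(* Let $q$ be a prime power and let $n$ and $d$ be odd integers satisfying $1\le d\le n$. Let $\operatorname{Tr}:\mathbb{F}_{q^{2n}}\to\mathbb{F}_{q^2}$, $\operatorname{Tr}(x)=\sum_{k=0}^{n-1}x^{q^{2k}}$. For $a_0\in\mathbb{F}_{q^n}$ and $a_1,\dots,a_{(n-d)/2}\in\mathbb{F}_{q^{2n}}$ define \[ H(x,y)=\operatorname{Tr}\bigg(a_0xy^{q^n}+\sum_{j=1}^{(n-d)/2}\big(a_jxy^{q^{n-2j}}+(a_j)^qx^{q^{n-2j+1}}y^q\big)\bigg),\qquad x,y\in\mathbb{F}_{q^{2n}}. \] Then, as $a_0$ ranges over $\mathbb{F}_{q^n}$ and $a_1,\dots,a_{(n-d)/2}$ range over $\mathbb{F}_{q^{2n}}$, these mappings $H$ are Hermitian forms on $\mathbb{F}_{q^{2n}}$ (viewed as an $n$-dimensional vector space over $\mathbb{F}_{q^2}$) and, identified with matrices in $X(n,q)$, they form an additive $d$-code in $X(n,q)$ of size $q^{n(n-d+1)}$.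
   Context: $X(n,q)$ is the set of $n\times n$ Hermitian matrices over $\mathbb{F}_{q^2}$ (matrices $A$ with $A^*=A$, where $A^*$ is the transpose of the matrix obtained by applying $x\mapsto x^q$ to each entry). A Hermitian form on an $n$-dimensional $\mathbb{F}_{q^2}$-vector space $V$ is a map $H:V\times V\to\mathbb{F}_{q^2}$ that is $\mathbb{F}_{q^2}$-linear in the first argument and satisfies $H(y,x)=H(x,y)^q$. Fixing a basis $\xi_1,\dots,\xi_n$ of $V$, $H$ is identified with the Hermitian matrix $(H(\xi_i,\xi_j))_{i,j}$; this is a bijection between Hermitian forms and $X(n,q)$, and the matrix rank equals $n-\dim\{x\in V:H(x,y)=0\ \forall y\}$. $\mathbb{F}_{q^n}$ is regarded as the subfield of $\mathbb{F}_{q^{2n}}$ of that order. A nonempty subset $Y\subseteq X(n,q)$ is a $d$-code if $\operatorname{rank}(A-B)\ge d$ for all distinct $A,B\in Y$; it is additive if it is a subgroup of $(X(n,q),+)$. *)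

theory Defs
  imports "HOL-Computational_Algebra.Primes" "Jordan_Normal_Form.DL_Rank"
begin

text \<open>The ambient field is a finite field type 'a of order q^(2n), i.e. F_{q^{2n}}.
  Its subfields F_{q^2} and F_{q^n} are the fixed points of the corresponding Frobenius powers.\<close>

definition subfield_of_order :: "nat \<Rightarrow> 'a::field set" where
  "subfield_of_order m = {x. x ^ m = x}"

definition prime_power :: "nat \<Rightarrow> bool" where
  "prime_power q \<longleftrightarrow> (\<exists>p e. prime p \<and> e \<ge> 1 \<and> q = p ^ e)"

definition Tr :: "nat \<Rightarrow> nat \<Rightarrow> 'a::field \<Rightarrow> 'a" where
  "Tr q n x = (\<Sum>k<n. x ^ (q ^ (2 * k)))"

definition Hform :: "nat \<Rightarrow> nat \<Rightarrow> nat \<Rightarrow> (nat \<Rightarrow> 'a::field) \<Rightarrow> 'a \<Rightarrow> 'a \<Rightarrow> 'a" where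
  "Hform q n d a x y = Tr q n (a 0 * x * y ^ (q ^ n)
      + (\<Sum>j\<in>{1..(n - d) div 2}. a j * x * y ^ (q ^ (n - 2 * j))
                                 + (a j) ^ q * x ^ (q ^ (n - 2 * j + 1)) * y ^ q))"

definition hermitian_form :: "nat \<Rightarrow> ('a::field \<Rightarrow> 'a \<Rightarrow> 'a) \<Rightarrow> bool" where
  "hermitian_form q H \<longleftrightarrow>
     (\<forall>x y. H x y \<in> subfield_of_order (q ^ 2)) \<and>
     (\<forall>x x' y. H (x + x') y = H x y + H x' y) \<and>
     (\<forall>c \<in> subfield_of_order (q ^ 2). \<forall>x y. H (c * x) y = c * H x y) \<and>
     (\<forall>x y. H y x = (H x y) ^ q)"

definition is_basis :: "nat \<Rightarrow> nat \<Rightarrow> (nat \<Rightarrow> 'a::field) \<Rightarrow> bool" where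
  "is_basis q n \<xi> \<longleftrightarrow>
     (\<forall>x. \<exists>!c. (\<forall>i<n. c i \<in> subfield_of_order (q ^ 2)) \<and> (\<forall>i\<ge>n. c i = 0) \<and>
              x = (\<Sum>i<n. c i * \<xi> i))"

definition form_matrix :: "nat \<Rightarrow> (nat \<Rightarrow> 'a) \<Rightarrow> ('a \<Rightarrow> 'a \<Rightarrow> 'a) \<Rightarrow> 'a mat" where
  "form_matrix n \<xi> H = mat n n (\<lambda>(i, j). H (\<xi> i) (\<xi> j))"

definition hermitian_mats :: "nat \<Rightarrow> nat \<Rightarrow> 'a::field mat set" where
  "hermitian_mats n q = {A. A \<in> carrier_mat n n \<and>
      (\<forall>i<n. \<forall>j<n. A $$ (i, j) \<in> subfield_of_order (q ^ 2) \<and> A $$ (j, i) = (A $$ (i, j)) ^ q)}"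

text \<open>Matrix rank (rank is invariant under field extension, so rank over the ambient field
  equals rank over F_{q^2} for matrices with entries in F_{q^2}).\<close>
definition mrank :: "nat \<Rightarrow> 'a::field mat \<Rightarrow> nat" where
  "mrank n A = vec_space.rank n A"

definition d_code :: "nat \<Rightarrow> nat \<Rightarrow> nat \<Rightarrow> 'a::field mat set \<Rightarrow> bool" where
  "d_code n q d Y \<longleftrightarrow> Y \<noteq> {} \<and> Y \<subseteq> hermitian_mats n q \<and>
     (\<forall>A\<in>Y. \<forall>B\<in>Y. A \<noteq> B \<longrightarrow> mrank n (A - B) \<ge> d)"

definition additive_code :: "nat \<Rightarrow> 'a::field mat set \<Rightarrow> bool" where
  "additive_code n Y \<longleftrightarrow> 0\<^sub>m n n \<in> Y \<and> (\<forall>A\<in>Y. \<forall>B\<in>Y. A + B \<in> Y) \<and> (\<forall>A\<in>Y. - A \<in> Y)"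

end

theory Submission
  imports Defs "HOL-Algebra.Multiplicative_Group" "HOL-Computational_Algebra.Polynomial" "HOL-Number_Theory.Residues"
begin

text \<open>Moving the Frobenius twists off \<open>x\<close> writes \<open>H\<^sub>a(x, y) = Tr(x L\<^sub>a(y))\<close> with \<open>L\<^sub>a\<close> a
  \<open>q\<close>-polynomial; as the trace form is nondegenerate, the radical of \<open>H\<^sub>a\<close> is the set of roots
  of \<open>L\<^sub>a\<close>. Raising \<open>L\<^sub>a(y)\<close> to the power \<open>q\<^sup>n\<^sup>+\<^sup>2\<^sup>J\<close>, \<open>J = (n - d)/2\<close>, turns it into a
  \<open>q\<^sup>2\<close>-polynomial of \<open>q\<^sup>2\<close>-degree at most \<open>2J = n - d\<close>, so for \<open>a \<noteq> 0\<close> the radical has at most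
  \<open>q\<^sup>2\<^sup>(\<^sup>n\<^sup>-\<^sup>d\<^sup>)\<close> elements and the Gram matrix has rank at least \<open>d\<close>. The rank is taken over
  \<open>F\<^sub>q\<^sub>2\<^sub>n\<close> while the radical is counted over \<open>F\<^sub>q\<^sub>2\<close>; the two are related by counting the
  image and kernel of the matrix on \<open>F\<^sub>q\<^sub>2\<^sup>n\<close>. Since \<open>a \<mapsto> H\<^sub>a\<close> is additive and only
  \<open>a\<^sub>0, \<dots>, a\<^sub>J\<close> enter it, differences of code words are again nonzero members of the
  family, which gives the minimum rank, and also injectivity on the \<open>q\<^sup>n (q\<^sup>2\<^sup>n)\<^sup>J\<close> truncated
  parameters.\<close>

section \<open>Finite fields and \<open>q\<close>-polynomials\<close>

lemma power_card_UNIV_eq_self: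
  fixes x :: "'a::{field,finite}"
  shows "x ^ card (UNIV :: 'a set) = x"
proof (cases "x = 0")
  case False
  interpret G: group "mult_of (class_ring :: 'a ring)"
    by (rule field.field_mult_group[OF class_field])
  have "x ^ (card (UNIV :: 'a set) - 1) = 1"
    using G.pow_order_eq_1[of x] False
    by (simp add: Coset.order_def nat_pow_mult_of class_ring_simps card_Diff_singleton)
  moreover have "card (UNIV :: 'a set) = Suc (card (UNIV :: 'a set) - 1)"
    using finite_UNIV_card_ge_0[where ?'a = 'a] by simp
  ultimately show ?thesis
    by (metis power_Suc mult_1_right)
qed (simp add: finite_UNIV_card_ge_0)

lemma power_power_power_add:
  fixes x :: "'a::monoid_mult"
  shows "(x ^ (q ^ a)) ^ (q ^ b) = x ^ (q ^ (a + b))"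
  by (simp add: power_mult[symmetric] power_add)

lemma power_q_power_power_Suc:
  fixes x :: "'a::monoid_mult"
  shows "(x ^ (q ^ a)) ^ q = x ^ (q ^ Suc a)" and "(x ^ q) ^ (q ^ a) = x ^ (q ^ Suc a)"
  by (simp_all add: power_mult[symmetric] mult.commute)

lemma power_q_power_q:
  fixes x :: "'a::monoid_mult"
  shows "(x ^ q) ^ q = x ^ (q ^ 2)"
  by (simp add: power_mult[symmetric] power2_eq_square)

lemma sum_centered_reindex:
  fixes c0 :: "'a::comm_semiring_0" and c1 c2 Y :: "nat \<Rightarrow> 'a"
  shows "c0 * Y m + (\<Sum>j\<in>{1..m}. c1 j * Y (m - j) + c2 j * Y (m + j))
    = (\<Sum>k\<le>2 * m. (if k = m then c0 else if k < m then c1 (m - k) else c2 (k - m)) * Y k)"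
    (is "_ = (\<Sum>k\<le>2 * m. ?b k * Y k)")
proof -
  have low: "(\<Sum>j\<in>{1..m}. c1 j * Y (m - j)) = (\<Sum>k<m. ?b k * Y k)"
    by (rule sum.reindex_bij_witness[of _ "\<lambda>k. m - k" "\<lambda>j. m - j"]) auto
  have high: "(\<Sum>j\<in>{1..m}. c2 j * Y (m + j)) = (\<Sum>k\<in>{m<..2 * m}. ?b k * Y k)"
    by (rule sum.reindex_bij_witness[of _ "\<lambda>k. k - m" "\<lambda>j. m + j"]) auto
  have split: "{..2 * m} = {..<m} \<union> ({m} \<union> {m<..2 * m})" by auto
  have "(\<Sum>k\<le>2 * m. ?b k * Y k) = (\<Sum>k<m. ?b k * Y k) + (?b m * Y m + (\<Sum>k\<in>{m<..2 * m}. ?b k * Y k))"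
    unfolding split by (subst sum.union_disjoint) (auto simp: sum.union_disjoint)
  also have "?b m = c0" by simp
  finally show ?thesis unfolding sum.distrib low high by (simp only: add_ac)
qed

lemma card_le_card_image_mult_card_fiber:
  assumes "finite A"
    and sub_closed: "\<And>u v. u \<in> A \<Longrightarrow> v \<in> A \<Longrightarrow> sub u v \<in> A"
    and sub_fiber: "\<And>u v. u \<in> A \<Longrightarrow> v \<in> A \<Longrightarrow> f u = f v \<Longrightarrow> f (sub u v) = z"
    and sub_cancel: "\<And>u u' v. u \<in> A \<Longrightarrow> u' \<in> A \<Longrightarrow> v \<in> A \<Longrightarrow> sub u v = sub u' v \<Longrightarrow> u = u'"
  shows "card A \<le> card (f ` A) * card {x \<in> A. f x = z}"
proof -
  have "A = (\<Union>w\<in>f ` A. {u \<in> A. f u = w})" by auto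
  hence "card A \<le> (\<Sum>w\<in>f ` A. card {u \<in> A. f u = w})"
    by (metis card_UN_le \<open>finite A\<close> finite_imageI)
  also have "\<dots> \<le> (\<Sum>w\<in>f ` A. card {x \<in> A. f x = z})"
  proof (rule sum_mono)
    fix w assume "w \<in> f ` A"
    then obtain v where v: "v \<in> A" "f v = w" by auto
    have "inj_on (\<lambda>u. sub u v) {u \<in> A. f u = w}"
      using sub_cancel v by (auto simp: inj_on_def)
    moreover have "(\<lambda>u. sub u v) ` {u \<in> A. f u = w} \<subseteq> {x \<in> A. f x = z}"
      using sub_closed sub_fiber v by auto
    ultimately show "card {u \<in> A. f u = w} \<le> card {x \<in> A. f x = z}"
      using \<open>finite A\<close> by (intro card_inj_on_le) auto
  qed
  also have "\<dots> = card (f ` A) * card {x \<in> A. f x = z}" by simp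
  finally show ?thesis .
qed

lemma card_roots_q_polynomial_le:
  fixes c :: "nat \<Rightarrow> 'a::idom" and E :: "nat \<Rightarrow> nat"
  assumes "2 \<le> q" and "finite I" and "inj_on E I" and "j \<in> I" "c j \<noteq> 0"
    and "\<And>k. k \<in> I \<Longrightarrow> E k \<le> D"
  shows "card {y. (\<Sum>k\<in>I. c k * y ^ (q ^ E k)) = 0} \<le> q ^ D"
proof -
  define p where "p = (\<Sum>k\<in>I. Polynomial.monom (c k) (q ^ E k))"
  have "q ^ E k = q ^ E j \<longleftrightarrow> k = j" if "k \<in> I" for k
    using assms(1,3,4) that by (auto simp: inj_on_def power_inject_exp)
  hence "Polynomial.coeff p (q ^ E j) = c j"
    using assms(2,4) by (simp add: p_def Polynomial.coeff_sum if_distrib cong: if_cong)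
  hence "p \<noteq> 0" using assms(5) by auto
  moreover have "degree p \<le> q ^ D"
    unfolding p_def
  proof (rule degree_sum_le[OF \<open>finite I\<close>])
    fix k assume "k \<in> I"
    have "degree (Polynomial.monom (c k) (q ^ E k)) \<le> q ^ E k" by (rule degree_monom_le)
    also have "\<dots> \<le> q ^ D" using assms(1,6) \<open>k \<in> I\<close> by (intro power_increasing) auto
    finally show "degree (Polynomial.monom (c k) (q ^ E k)) \<le> q ^ D" .
  qed
  ultimately have "card {y. poly p y = 0} \<le> q ^ D"
    using card_poly_roots_bound le_trans by blast
  thus ?thesis by (simp add: p_def poly_sum poly_monom)
qed

section \<open>Rank over a finite subfield\<close>

definition vecs_over :: "'a set \<Rightarrow> nat \<Rightarrow> 'a vec set" where
  "vecs_over K m = {v \<in> carrier_vec m. \<forall>i<m. v $ i \<in> K}"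

definition lin_indpt_over :: "'a::field set \<Rightarrow> nat \<Rightarrow> 'a vec set \<Rightarrow> bool" where
  "lin_indpt_over K m S \<longleftrightarrow>
     (\<forall>c. (\<forall>s\<in>S. c s \<in> K) \<longrightarrow> (\<forall>i<m. (\<Sum>s\<in>S. c s * s $ i) = 0) \<longrightarrow> (\<forall>s\<in>S. c s = 0))"

definition basis_over :: "'a::field set \<Rightarrow> nat \<Rightarrow> (nat \<Rightarrow> 'a) \<Rightarrow> bool" where
  "basis_over K m \<xi> \<longleftrightarrow>
     (\<forall>x. \<exists>!c. (\<forall>i<m. c i \<in> K) \<and> (\<forall>i\<ge>m. c i = 0) \<and> x = (\<Sum>i<m. c i * \<xi> i))"

locale finite_subfield =
  fixes K :: "'a::field set"
  assumes finite_K: "finite K"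
    and zero_mem: "0 \<in> K" and one_mem: "1 \<in> K"
    and add_mem: "x \<in> K \<Longrightarrow> y \<in> K \<Longrightarrow> x + y \<in> K"
    and uminus_mem: "x \<in> K \<Longrightarrow> - x \<in> K"
    and mult_mem: "x \<in> K \<Longrightarrow> y \<in> K \<Longrightarrow> x * y \<in> K"
    and inverse_mem: "x \<in> K \<Longrightarrow> inverse x \<in> K"
begin

lemma diff_mem: "x \<in> K \<Longrightarrow> y \<in> K \<Longrightarrow> x - y \<in> K"
  unfolding diff_conv_add_uminus by (intro add_mem uminus_mem)

lemma divide_mem: "x \<in> K \<Longrightarrow> y \<in> K \<Longrightarrow> x / y \<in> K"
  unfolding divide_inverse by (intro mult_mem inverse_mem)

lemma sum_mem: "(\<And>i. i \<in> A \<Longrightarrow> f i \<in> K) \<Longrightarrow> sum f A \<in> K"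
  by (induction A rule: infinite_finite_induct) (simp_all add: zero_mem add_mem)

lemma two_le_card_K: "2 \<le> card K"
proof -
  have "card {0 :: 'a, 1} \<le> card K"
    using zero_mem one_mem by (intro card_mono[OF finite_K]) simp
  thus ?thesis by simp
qed

lemma bij_betw_vec_vecs_over: "bij_betw (vec m) (PiE {..<m} (\<lambda>_. K)) (vecs_over K m)"
proof (rule bij_betw_imageI)
  show "inj_on (vec m) (PiE {..<m} (\<lambda>_. K))"
  proof (rule inj_onI)
    fix f g assume fg: "f \<in> PiE {..<m} (\<lambda>_. K)" "g \<in> PiE {..<m} (\<lambda>_. K)" "vec m f = vec m g"
    show "f = g"
    proof (rule PiE_ext[OF fg(1,2)])
      fix i assume "i \<in> {..<m}"
      thus "f i = g i" using arg_cong[OF fg(3), of "\<lambda>v. v $ i"] by simp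
    qed
  qed
  show "vec m ` PiE {..<m} (\<lambda>_. K) = vecs_over K m"
  proof (intro equalityI subsetI)
    fix v assume "v \<in> vec m ` PiE {..<m} (\<lambda>_. K)"
    then obtain f where "f \<in> PiE {..<m} (\<lambda>_. K)" and "v = vec m f" by blast
    thus "v \<in> vecs_over K m" by (auto simp: vecs_over_def PiE_iff)
  next
    fix v assume "v \<in> vecs_over K m"
    hence "v = vec m (restrict (($) v) {..<m})" and "restrict (($) v) {..<m} \<in> PiE {..<m} (\<lambda>_. K)"
      by (auto simp: vecs_over_def)
    thus "v \<in> vec m ` PiE {..<m} (\<lambda>_. K)" by blast
  qed
qed

lemma card_vecs_over: "card (vecs_over K m) = card K ^ m"
  using bij_betw_same_card[OF bij_betw_vec_vecs_over] by (simp add: card_PiE)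

lemma finite_vecs_over: "finite (vecs_over K m)"
  using bij_betw_finite[OF bij_betw_vec_vecs_over] finite_K by (simp add: finite_PiE)

lemma basis_over_coordinates_eq_0:
  assumes "basis_over K m \<xi>" and "\<forall>l<m. e l \<in> K" and "(\<Sum>l<m. e l * \<xi> l) = 0" and "l < m"
  shows "e l = 0"
proof -
  define e' where "e' l = (if l < m then e l else 0)" for l
  define P where "P c \<longleftrightarrow> (\<forall>i<m. c i \<in> K) \<and> (\<forall>i\<ge>m. c i = 0) \<and> 0 = (\<Sum>i<m. c i * \<xi> i)"
    for c :: "nat \<Rightarrow> 'a"
  have "\<exists>!c. P c"
    using assms(1) unfolding basis_over_def P_def by blast
  moreover have "P e'"
    using assms(2,3) by (simp add: P_def e'_def)
  moreover have "P (\<lambda>_. 0)"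
    using zero_mem by (simp add: P_def)
  ultimately have "e' = (\<lambda>_. 0)" by blast
  hence "e' l = 0" by simp
  thus ?thesis using \<open>l < m\<close> by (simp add: e'_def)
qed

text \<open>Expanding the coefficients of a dependence in a \<open>K\<close>-basis splits it into
  \<open>K\<close>-dependences, one for each basis vector.\<close>

lemma lin_indpt_over_imp_lin_indpt:
  assumes basis: "basis_over K m \<xi>" and S: "finite S" "S \<subseteq> carrier_vec nr"
    and S_entries: "\<And>s i. s \<in> S \<Longrightarrow> i < nr \<Longrightarrow> s $ i \<in> K"
    and indpt: "lin_indpt_over K nr S"
  shows "\<not> module.lin_dep class_ring (module_vec TYPE('a) nr) S"
proof
  interpret vec_space "TYPE('a)" nr .
  assume "lin_dep S"
  then obtain A a v where A: "finite A" "A \<subseteq> S" and lincomb: "lincomb a A = 0\<^sub>v nr"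
    and v: "v \<in> A" "a v \<noteq> 0"
    unfolding lin_dep_def by auto
  obtain co where co: "\<And>x. (\<forall>l<m. co x l \<in> K) \<and> x = (\<Sum>l<m. co x l * \<xi> l)"
    using basis unfolding basis_over_def by metis
  have coordinates_combination: "(\<Sum>s\<in>A. co (a s) l * s $ i) = 0" if "i < nr" "l < m" for i l
  proof (rule basis_over_coordinates_eq_0[OF basis _ _ \<open>l < m\<close>])
    show "\<forall>l<m. (\<Sum>s\<in>A. co (a s) l * s $ i) \<in> K"
      using co A \<open>i < nr\<close> S_entries by (blast intro: sum_mem mult_mem)
    have "(\<Sum>l<m. (\<Sum>s\<in>A. co (a s) l * s $ i) * \<xi> l) = (\<Sum>s\<in>A. s $ i * (\<Sum>l<m. co (a s) l * \<xi> l))"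
      by (simp add: sum_distrib_left sum_distrib_right sum.swap[of _ A] mult_ac)
    also have "\<dots> = (\<Sum>s\<in>A. a s * s $ i)"
      using co by (intro sum.cong) (auto simp: mult.commute)
    also have "\<dots> = lincomb a A $ i"
      using A S \<open>i < nr\<close> by (intro lincomb_index[symmetric]) auto
    finally show "(\<Sum>l<m. (\<Sum>s\<in>A. co (a s) l * s $ i) * \<xi> l) = 0"
      using lincomb \<open>i < nr\<close> by simp
  qed
  have "co (a v) l = 0" if "l < m" for l
  proof -
    define c where "c s = (if s \<in> A then co (a s) l else 0)" for s
    have "(\<Sum>s\<in>S. c s * s $ i) = (\<Sum>s\<in>A. co (a s) l * s $ i)" for i
    proof -
      have "(\<Sum>s\<in>S. c s * s $ i) = (\<Sum>s\<in>S \<inter> A. co (a s) l * s $ i)"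
        unfolding sum.inter_restrict[OF S(1)] by (intro sum.cong) (simp_all add: c_def)
      also have "S \<inter> A = A" using A by blast
      finally show ?thesis .
    qed
    hence "\<forall>i<nr. (\<Sum>s\<in>S. c s * s $ i) = 0"
      using coordinates_combination \<open>l < m\<close> by simp
    moreover have "\<forall>s\<in>S. c s \<in> K"
      using co zero_mem \<open>l < m\<close> by (simp add: c_def)
    ultimately have "c v = 0"
      using indpt v A unfolding lin_indpt_over_def by blast
    thus ?thesis using v by (simp add: c_def)
  qed
  hence "a v = 0" using co[of "a v"] by simp
  thus False using v by simp
qed

lemma span_of_maximal_lin_indpt_over:
  assumes "finite C" and S_max: "maximal S (\<lambda>T. T \<subseteq> C \<and> lin_indpt_over K m T)" and "w \<in> C"
  obtains c where "\<forall>s\<in>S. c s \<in> K" and "\<forall>i<m. w $ i = (\<Sum>s\<in>S. c s * s $ i)"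
proof -
  have "S \<subseteq> C" and indpt: "lin_indpt_over K m S"
    using S_max by (simp_all add: maximal_def)
  hence "finite S" using \<open>finite C\<close> finite_subset by blast
  show ?thesis
  proof (cases "w \<in> S")
    case True
    have "(\<Sum>s\<in>S. (if s = w then 1 else 0) * s $ i) = w $ i" for i
    proof -
      have "(\<Sum>s\<in>S. (if s = w then 1 else 0) * s $ i) = (\<Sum>s\<in>S. if s = w then s $ i else 0)"
        by (intro sum.cong) simp_all
      thus ?thesis using True \<open>finite S\<close> by simp
    qed
    thus ?thesis
      using zero_mem one_mem by (intro that[of "\<lambda>s. if s = w then 1 else 0"]) simp_all
  next
    case False
    hence "\<not> lin_indpt_over K m (insert w S)"
      using S_max \<open>w \<in> C\<close> \<open>S \<subseteq> C\<close> unfolding maximal_def by blast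
    then obtain c where c_mem: "\<forall>s\<in>insert w S. c s \<in> K"
      and c_dep: "\<forall>i<m. c w * w $ i + (\<Sum>s\<in>S. c s * s $ i) = 0"
      and c_nz: "\<exists>s\<in>insert w S. c s \<noteq> 0"
      using False \<open>finite S\<close> unfolding lin_indpt_over_def by auto
    have "c w \<noteq> 0"
    proof
      assume "c w = 0"
      hence "\<forall>s\<in>S. c s = 0"
        using indpt c_mem c_dep unfolding lin_indpt_over_def by simp
      thus False using c_nz \<open>c w = 0\<close> by auto
    qed
    show ?thesis
    proof (rule that[of "\<lambda>s. - c s / c w"])
      show "\<forall>s\<in>S. - c s / c w \<in> K" using c_mem by (simp add: divide_mem uminus_mem)
      show "\<forall>i<m. w $ i = (\<Sum>s\<in>S. - c s / c w * s $ i)"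
        using c_dep \<open>c w \<noteq> 0\<close>
        by (simp add: sum_divide_distrib[symmetric] sum_negf field_simps add_eq_0_iff)
    qed
  qed
qed

lemma card_mult_mat_vec_image_le:
  assumes M: "M \<in> carrier_mat nr nc" and "finite S"
    and cols: "\<And>j. j < nc \<Longrightarrow> \<exists>c. (\<forall>s\<in>S. c s \<in> K) \<and> (\<forall>i<nr. M $$ (i, j) = (\<Sum>s\<in>S. c s * s $ i))"
  shows "card ((\<lambda>v. M *\<^sub>v v) ` vecs_over K nc) \<le> card K ^ card S"
proof -
  obtain cf where cf: "\<And>j. j < nc \<Longrightarrow> (\<forall>s\<in>S. cf j s \<in> K) \<and> (\<forall>i<nr. M $$ (i, j) = (\<Sum>s\<in>S. cf j s * s $ i))"
    using cols by metis
  define comb where "comb c = vec nr (\<lambda>i. \<Sum>s\<in>S. c s * s $ i)" for c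
  have "(\<lambda>v. M *\<^sub>v v) ` vecs_over K nc \<subseteq> comb ` PiE S (\<lambda>_. K)"
  proof
    fix u assume "u \<in> (\<lambda>v. M *\<^sub>v v) ` vecs_over K nc"
    then obtain v where v: "v \<in> vecs_over K nc" and u: "u = M *\<^sub>v v" by auto
    define e where "e s = (\<Sum>j<nc. v $ j * cf j s)" for s
    have "M *\<^sub>v v = comb e"
    proof (rule eq_vecI)
      fix i assume "i < dim_vec (comb e)"
      hence "i < nr" by (simp add: comb_def)
      have "(M *\<^sub>v v) $ i = (\<Sum>j<nc. M $$ (i, j) * v $ j)"
        using M v \<open>i < nr\<close>
        by (auto simp: vecs_over_def scalar_prod_def atLeast0LessThan intro!: sum.cong)
      also have "\<dots> = (\<Sum>j<nc. (\<Sum>s\<in>S. cf j s * s $ i) * v $ j)"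
        using cf \<open>i < nr\<close> by simp
      also have "\<dots> = (\<Sum>s\<in>S. e s * s $ i)"
        by (simp add: e_def sum_distrib_left sum_distrib_right sum.swap[of _ S] mult_ac)
      finally show "(M *\<^sub>v v) $ i = comb e $ i" using \<open>i < nr\<close> by (simp add: comb_def)
    qed (use M in \<open>simp add: comb_def\<close>)
    also have "comb e = comb (restrict e S)"
      unfolding comb_def by (intro arg_cong[where f = "vec nr"] ext sum.cong) auto
    moreover have "restrict e S \<in> PiE S (\<lambda>_. K)"
      using v cf unfolding e_def vecs_over_def by (auto intro!: sum_mem mult_mem)
    ultimately show "u \<in> comb ` PiE S (\<lambda>_. K)" using u by (metis image_eqI)
  qed
  hence "card ((\<lambda>v. M *\<^sub>v v) ` vecs_over K nc) \<le> card (comb ` PiE S (\<lambda>_. K))"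
    using \<open>finite S\<close> finite_K by (intro card_mono) (simp_all add: finite_PiE)
  also have "\<dots> \<le> card (PiE S (\<lambda>_. K))"
    using \<open>finite S\<close> finite_K by (intro card_image_le) (simp add: finite_PiE)
  also have "\<dots> = card K ^ card S"
    using \<open>finite S\<close> by (simp add: card_PiE)
  finally show ?thesis .
qed

lemma card_vecs_over_le_card_image_mult_card_kernel:
  assumes M: "M \<in> carrier_mat nr nc"
  shows "card (vecs_over K nc)
    \<le> card ((\<lambda>v. M *\<^sub>v v) ` vecs_over K nc) * card {v \<in> vecs_over K nc. M *\<^sub>v v = 0\<^sub>v nr}"
proof (rule card_le_card_image_mult_card_fiber[where sub = minus])
  show "finite (vecs_over K nc)" by (rule finite_vecs_over)
next
  fix u v assume "u \<in> vecs_over K nc" "v \<in> vecs_over K nc"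
  thus "u - v \<in> vecs_over K nc" by (auto simp: vecs_over_def diff_mem)
next
  fix u v assume "u \<in> vecs_over K nc" "v \<in> vecs_over K nc" and "M *\<^sub>v u = M *\<^sub>v v"
  hence "M *\<^sub>v (u - v) = M *\<^sub>v u - M *\<^sub>v v"
    using M by (intro mult_minus_distrib_mat_vec) (auto simp: vecs_over_def)
  also have "\<dots> = 0\<^sub>v nr"
    using \<open>M *\<^sub>v u = M *\<^sub>v v\<close> M by (auto intro!: eq_vecI)
  finally show "M *\<^sub>v (u - v) = 0\<^sub>v nr" .
next
  fix u u' v assume "u \<in> vecs_over K nc" "u' \<in> vecs_over K nc" "v \<in> vecs_over K nc" "u - v = u' - v"
  hence dims: "dim_vec u = nc" "dim_vec u' = nc" "dim_vec v = nc" and "u - v = u' - v"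
    by (simp_all add: vecs_over_def)
  show "u = u'"
  proof (rule eq_vecI)
    fix i assume "i < dim_vec u'"
    hence "(u - v) $ i = (u' - v) $ i" using \<open>u - v = u' - v\<close> by simp
    thus "u $ i = u' $ i" using \<open>i < dim_vec u'\<close> dims by simp
  qed (simp add: dims)
qed

text \<open>The image of \<open>K\<^sup>n\<^sup>c\<close> lies in the \<open>K\<close>-span of a maximal \<open>K\<close>-independent set \<open>S\<close>
  of columns, so \<open>|K|\<^sup>n\<^sup>c \<le> |K|\<^sup>|\<^sup>S\<^sup>| \<cdot> |kernel|\<close>.\<close>

theorem rank_ge_if_card_kernel_le:
  assumes basis: "basis_over K m \<xi>" and M: "M \<in> carrier_mat nr nc"
    and entries: "\<And>i j. i < nr \<Longrightarrow> j < nc \<Longrightarrow> M $$ (i, j) \<in> K"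
    and kernel: "card {v \<in> vecs_over K nc. M *\<^sub>v v = 0\<^sub>v nr} \<le> card K ^ (nc - r)"
    and "r \<le> nc"
  shows "r \<le> vec_space.rank nr M"
proof -
  let ?P = "\<lambda>T. T \<subseteq> set (cols M) \<and> lin_indpt_over K nr T"
  obtain S where "finite S" and S_max: "maximal S ?P"
    using maximal_exists_superset[of "set (cols M)" ?P "{}"] by (auto simp: lin_indpt_over_def)
  hence S: "S \<subseteq> set (cols M)" "lin_indpt_over K nr S" by (simp_all add: maximal_def)
  have col_mem: "col M j \<in> set (cols M)" if "j < nc" for j
    using M that by (simp add: cols_def)
  have "card K ^ nc \<le> card K ^ card S * card K ^ (nc - r)"
  proof -
    have "card K ^ nc \<le>
        card ((\<lambda>v. M *\<^sub>v v) ` vecs_over K nc) * card {v \<in> vecs_over K nc. M *\<^sub>v v = 0\<^sub>v nr}"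
      using card_vecs_over_le_card_image_mult_card_kernel[OF M] by (simp add: card_vecs_over)
    also have "\<dots> \<le> card K ^ card S * card K ^ (nc - r)"
    proof (intro mult_le_mono kernel card_mult_mat_vec_image_le[OF M \<open>finite S\<close>])
      fix j assume "j < nc"
      obtain c where "\<forall>s\<in>S. c s \<in> K" "\<forall>i<nr. col M j $ i = (\<Sum>s\<in>S. c s * s $ i)"
        using span_of_maximal_lin_indpt_over[OF _ S_max col_mem[OF \<open>j < nc\<close>]] by auto
      thus "\<exists>c. (\<forall>s\<in>S. c s \<in> K) \<and> (\<forall>i<nr. M $$ (i, j) = (\<Sum>s\<in>S. c s * s $ i))"
        using M \<open>j < nc\<close> by auto
    qed
    finally show ?thesis .
  qed
  hence "nc \<le> card S + (nc - r)"
    using two_le_card_K by (simp add: power_add[symmetric] power_le_imp_le_exp)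
  hence "r \<le> card S" using \<open>r \<le> nc\<close> by simp
  also have "card S \<le> vec_space.rank nr M"
  proof (rule vec_space.rank_ge_card_indpt[OF M S(1)])
    have "S \<subseteq> carrier_vec nr" using S(1) M cols_dim by blast
    moreover have "s $ i \<in> K" if "s \<in> S" "i < nr" for s i
      using S(1) that M entries by (auto simp: cols_def)
    ultimately show "\<not> module.lin_dep class_ring (module_vec TYPE('a) nr) S"
      using lin_indpt_over_imp_lin_indpt[OF basis \<open>finite S\<close>] S(2) by blast
  qed
  finally show ?thesis .
qed

end

section \<open>The field with \<open>q\<^sup>2\<^sup>n\<close> elements\<close>

locale gf_q2n =
  fixes q n :: nat and field_type :: "'a::{field,finite} itself"
  assumes prime_power_q: "prime_power q"
    and card_UNIV: "card (UNIV :: 'a set) = q ^ (2 * n)"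
    and n_pos: "1 \<le> n"
begin

abbreviation tr :: "'a \<Rightarrow> 'a" where
  "tr \<equiv> Tr q n"

abbreviation Fq2 :: "'a set" where
  "Fq2 \<equiv> subfield_of_order (q ^ 2)"

lemma prime_CHAR: "prime CHAR('a)"
  using prime_CHAR_semidom[where ?'a = 'a] finite_imp_CHAR_pos[where ?'a = 'a] by simp

lemma q_eq_CHAR_power: "\<exists>e. q = CHAR('a) ^ e"
proof -
  obtain p e where p: "prime p" "q = p ^ e"
    using prime_power_q unfolding prime_power_def by blast
  have "CHAR('a) dvd card (UNIV :: 'a set)" by (rule CHAR_dvd_CARD)
  also have "card (UNIV :: 'a set) = p ^ (e * (2 * n))"
    using card_UNIV p(2) by (simp add: power_mult)
  finally have "CHAR('a) dvd p"
    using prime_CHAR prime_dvd_power by metis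
  hence "CHAR('a) = p"
    using prime_CHAR p(1) primes_dvd_imp_eq by blast
  thus ?thesis using p(2) by blast
qed

lemma q_ge_2: "2 \<le> q"
proof -
  obtain p e where "prime p" "1 \<le> e" "q = p ^ e"
    using prime_power_q unfolding prime_power_def by blast
  moreover have "p ^ 1 \<le> p ^ e"
    using \<open>1 \<le> e\<close> prime_gt_0_nat[OF \<open>prime p\<close>] by (intro power_increasing) auto
  ultimately show ?thesis
    using prime_ge_2_nat[OF \<open>prime p\<close>] by simp
qed

lemma frobenius_add: "(x + y :: 'a) ^ (q ^ k) = x ^ (q ^ k) + y ^ (q ^ k)"
proof -
  obtain e where "q = CHAR('a) ^ e" using q_eq_CHAR_power by blast
  thus ?thesis
    using prime_CHAR by (intro freshmans_dream'[where n = "e * k"]) (simp_all add: power_mult)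
qed

lemma frobenius_sum: "(sum f A :: 'a) ^ (q ^ k) = (\<Sum>i\<in>A. f i ^ (q ^ k))"
proof -
  obtain e where "q = CHAR('a) ^ e" using q_eq_CHAR_power by blast
  thus ?thesis
    using prime_CHAR by (intro freshmans_dream_sum'[where n = "e * k"]) (simp_all add: power_mult)
qed

lemma frobenius_diff: "(x - y :: 'a) ^ (q ^ k) = x ^ (q ^ k) - y ^ (q ^ k)"
  using frobenius_add[of "x - y" y k] by (simp add: algebra_simps)

lemma frobenius_minus: "(- x :: 'a) ^ (q ^ k) = - (x ^ (q ^ k))"
  using frobenius_diff[of 0 x k] q_ge_2 by simp

lemma frobenius_q_add: "(x + y :: 'a) ^ q = x ^ q + y ^ q"
  using frobenius_add[of x y 1] by simp

lemma frobenius_q_sum: "(sum f A :: 'a) ^ q = (\<Sum>i\<in>A. f i ^ q)"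
  using frobenius_sum[of f A 1] by simp

lemma power_q_power_2n: "(x :: 'a) ^ (q ^ (2 * n)) = x"
  using power_card_UNIV_eq_self[of x] card_UNIV by simp

lemma power_q_power_periodic:
  assumes "e = k + 2 * n"
  shows "(x :: 'a) ^ (q ^ e) = x ^ (q ^ k)"
proof -
  have "x ^ (q ^ e) = (x ^ (q ^ (2 * n))) ^ (q ^ k)"
    using assms by (simp add: power_power_power_add add.commute)
  thus ?thesis by (simp only: power_q_power_2n)
qed

lemma power_q_power_eq_self: "e = 2 * n \<Longrightarrow> (x :: 'a) ^ (q ^ e) = x"
  by (simp add: power_q_power_2n)

lemma Fq2_power_q_power_even:
  assumes "c \<in> Fq2"
  shows "c ^ (q ^ (2 * m)) = c"
proof (induction m)
  case (Suc m)
  have "c ^ (q ^ (2 * Suc m)) = (c ^ (q ^ (2 * m))) ^ (q ^ 2)"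
    by (simp add: power_power_power_add)
  thus ?case using Suc assms by (simp add: subfield_of_order_def)
qed simp

lemma tr_add: "tr (x + y) = tr x + tr y"
  unfolding Tr_def by (simp add: frobenius_add sum.distrib)

lemma tr_sum: "tr (sum f A) = (\<Sum>i\<in>A. tr (f i))"
  unfolding Tr_def by (simp add: frobenius_sum sum.swap[of _ A])

lemma tr_diff: "tr (x - y) = tr x - tr y"
  unfolding Tr_def by (simp add: frobenius_diff sum_subtractf)

lemma tr_power_q_power: "tr x ^ (q ^ k) = tr (x ^ (q ^ k))"
  unfolding Tr_def by (simp add: frobenius_sum power_power_power_add add.commute)

lemma tr_power_q: "tr x ^ q = tr (x ^ q)"
  using tr_power_q_power[of x 1] by simp

lemma tr_power_q_power_even: "tr (x ^ (q ^ (2 * m))) = tr x"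
proof -
  have tr_power_q2: "tr (x ^ (q ^ 2)) = tr x" for x
  proof -
    obtain m where m: "n = Suc m" using n_pos by (cases n) auto
    define f where "f k = x ^ (q ^ (2 * k))" for k
    have "f (Suc m) = f 0"
      unfolding f_def m[symmetric] power_q_power_2n by simp
    have "tr (x ^ (q ^ 2)) = (\<Sum>k<Suc m. f (Suc k))"
      unfolding Tr_def f_def m by (simp add: power_power_power_add add.commute)
    also have "\<dots> = f 0 + (\<Sum>k<m. f (Suc k))"
      using \<open>f (Suc m) = f 0\<close> by (simp add: add.commute)
    also have "\<dots> = (\<Sum>k<Suc m. f k)"
      by (rule sum.lessThan_Suc_shift[symmetric])
    finally show ?thesis unfolding Tr_def f_def m .
  qed
  show ?thesis
  proof (induction m)
    case (Suc m)
    have "x ^ (q ^ (2 * Suc m)) = (x ^ (q ^ (2 * m))) ^ (q ^ 2)"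
      by (simp add: power_power_power_add)
    thus ?case using Suc tr_power_q2 by simp
  qed simp
qed

lemma tr_in_Fq2: "tr x \<in> Fq2"
proof -
  have "tr x ^ (q ^ 2) = tr (x ^ (q ^ (2 * 1)))"
    by (simp add: tr_power_q_power)
  thus ?thesis
    unfolding tr_power_q_power_even by (simp add: subfield_of_order_def)
qed

lemma tr_mult_Fq2: "c \<in> Fq2 \<Longrightarrow> tr (c * x) = c * tr x"
  unfolding Tr_def by (simp add: sum_distrib_left Fq2_power_q_power_even power_mult_distrib)

lemma tr_not_zero: "\<exists>z. tr z \<noteq> 0"
proof (rule ccontr)
  assume "\<not> (\<exists>z. tr z \<noteq> 0)"
  hence "{y. (\<Sum>k<n. 1 * y ^ (q ^ (2 * k))) = (0 :: 'a)} = UNIV"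
    by (simp add: Tr_def)
  moreover have "card {y. (\<Sum>k<n. 1 * y ^ (q ^ (2 * k))) = (0 :: 'a)} \<le> q ^ (2 * (n - 1))"
    using q_ge_2 n_pos by (intro card_roots_q_polynomial_le[where j = 0]) (auto simp: inj_on_def)
  moreover have "q ^ (2 * (n - 1)) < q ^ (2 * n)"
    using q_ge_2 n_pos by (intro power_strict_increasing) auto
  ultimately show False using card_UNIV by simp
qed

lemma tr_nondegenerate:
  assumes "\<And>x. tr (x * w) = 0"
  shows "w = 0"
proof (rule ccontr)
  assume "w \<noteq> 0"
  obtain z where "tr z \<noteq> 0" using tr_not_zero by blast
  moreover have "tr (z / w * w) = 0" by (rule assms)
  ultimately show False using \<open>w \<noteq> 0\<close> by simp
qed

lemma card_subfield_of_order_le: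
  assumes "1 \<le> k"
  shows "card (subfield_of_order (q ^ k) :: 'a set) \<le> q ^ k"
proof -
  have "subfield_of_order (q ^ k) =
      {y :: 'a. (\<Sum>i\<in>{0, 1 :: nat}. (if i = 0 then 1 else -1) * y ^ (q ^ (if i = 0 then k else 0))) = 0}"
    by (auto simp: subfield_of_order_def)
  also have "card \<dots> \<le> q ^ k"
    using q_ge_2 assms by (intro card_roots_q_polynomial_le[where j = 0]) (auto simp: inj_on_def)
  finally show ?thesis .
qed

text \<open>For the lower bound, the additive map \<open>x \<mapsto> x ^ q ^ k - x\<close> takes values among the roots of
  the telescoping sum \<open>\<Sum>i<m. y ^ q ^ (k * i)\<close>, where \<open>k * m = 2 * n\<close>, so its kernel is large.\<close>

lemma card_subfield_of_order:
  assumes "k dvd 2 * n" and "1 \<le> k"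
  shows "card (subfield_of_order (q ^ k) :: 'a set) = q ^ k"
proof (rule antisym)
  show "card (subfield_of_order (q ^ k) :: 'a set) \<le> q ^ k"
    using card_subfield_of_order_le[OF assms(2)] .
next
  obtain m where km: "2 * n = k * m" using assms(1) by blast
  hence m: "1 \<le> m" using n_pos by (cases m) auto
  define f where "f x = x ^ (q ^ k) - x" for x :: 'a
  have "q ^ (2 * n) \<le> card (range f) * card {x \<in> UNIV. f x = 0}"
    unfolding card_UNIV[symmetric]
  proof (rule card_le_card_image_mult_card_fiber[where sub = minus])
    fix u v :: 'a assume "f u = f v"
    thus "f (u - v) = 0" by (simp add: f_def frobenius_diff algebra_simps)
  qed auto
  also have "{x \<in> UNIV. f x = 0} = subfield_of_order (q ^ k)"
    by (auto simp: f_def subfield_of_order_def)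
  finally have card_UNIV_le: "q ^ (2 * n) \<le> card (range f) * card (subfield_of_order (q ^ k) :: 'a set)" .
  have "(\<Sum>i<m. 1 * f x ^ (q ^ (k * i))) = 0" for x
  proof -
    have "(\<Sum>i<m. 1 * f x ^ (q ^ (k * i))) = (\<Sum>i<m. x ^ (q ^ (k * Suc i)) - x ^ (q ^ (k * i)))"
      by (simp add: f_def frobenius_diff power_power_power_add)
    also have "\<dots> = x ^ (q ^ (k * m)) - x ^ (q ^ (k * 0))"
      by (rule sum_lessThan_telescope)
    finally show ?thesis using km power_q_power_2n by simp
  qed
  hence "card (range f) \<le> card {y. (\<Sum>i<m. 1 * y ^ (q ^ (k * i))) = (0 :: 'a)}"
    by (intro card_mono) auto
  also have "\<dots> \<le> q ^ (k * (m - 1))"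
    using q_ge_2 m assms(2) by (intro card_roots_q_polynomial_le[where j = 0]) (auto simp: inj_on_def)
  finally have card_range: "card (range f) \<le> q ^ (k * (m - 1))" .
  have "q ^ (2 * n) = q ^ (k * (m - 1)) * q ^ k"
    using km m by (simp add: power_add[symmetric] algebra_simps)
  show "q ^ k \<le> card (subfield_of_order (q ^ k) :: 'a set)"
  proof (rule ccontr)
    assume "\<not> ?thesis"
    moreover have "0 < card (range f)" by (simp add: card_gt_0_iff)
    ultimately have "card (range f) * card (subfield_of_order (q ^ k) :: 'a set) < q ^ (k * (m - 1)) * q ^ k"
      using card_range by (intro mult_le_less_imp_less) auto
    thus False using card_UNIV_le \<open>q ^ (2 * n) = q ^ (k * (m - 1)) * q ^ k\<close> by simp
  qed
qed

lemma card_Fq2: "card Fq2 = q ^ 2"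
  using card_subfield_of_order[of 2] by simp

sublocale Fq2: finite_subfield Fq2
proof
  show "finite Fq2" by simp
  show "0 \<in> Fq2" "1 \<in> Fq2"
    using q_ge_2 by (simp_all add: subfield_of_order_def)
  fix x y assume "x \<in> Fq2"
  thus "- x \<in> Fq2" "inverse x \<in> Fq2"
    by (simp_all add: subfield_of_order_def frobenius_minus power_inverse)
  assume "y \<in> Fq2"
  thus "x + y \<in> Fq2" "x * y \<in> Fq2"
    using \<open>x \<in> Fq2\<close> by (simp_all add: subfield_of_order_def frobenius_add power_mult_distrib)
qed

end

section \<open>The forms \<open>H\<^sub>a\<close>\<close>

locale Hform_family = gf_q2n q n field_type for q n :: nat and field_type :: "'a::{field,finite} itself" +
  fixes d :: nat
  assumes n_odd: "odd n" and d_odd: "odd d" and d_pos: "1 \<le> d" and d_le_n: "d \<le> n"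
begin

definition J :: nat where
  "J = (n - d) div 2"

definition N :: nat where
  "N = (n - 1) div 2"

lemma n_eq: "n = 2 * N + 1"
  using n_odd unfolding N_def by presburger

lemma n_minus_d_eq: "n - d = 2 * J"
  using n_odd d_odd d_le_n unfolding J_def by presburger

lemma J_le_N: "J \<le> N"
  using n_eq n_minus_d_eq d_pos by linarith

definition Hsum :: "(nat \<Rightarrow> 'a) \<Rightarrow> 'a \<Rightarrow> 'a \<Rightarrow> 'a" where
  "Hsum a x y = a 0 * x * y ^ (q ^ n)
      + (\<Sum>j\<in>{1..J}. a j * x * y ^ (q ^ (n - 2 * j)) + a j ^ q * x ^ (q ^ (n - 2 * j + 1)) * y ^ q)"

lemma Hform_eq_tr_Hsum:
  fixes a :: "nat \<Rightarrow> 'a"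
  shows "Hform q n d a x y = tr (Hsum a x y)"
  unfolding Hform_def Hsum_def J_def by simp

text \<open>\<open>Hadj a\<close> is the \<open>q\<close>-polynomial \<open>L\<^sub>a\<close> with \<open>H\<^sub>a(x, y) = Tr(x L\<^sub>a(y))\<close>.\<close>

definition Hadj :: "(nat \<Rightarrow> 'a) \<Rightarrow> 'a \<Rightarrow> 'a" where
  "Hadj a y = a 0 * y ^ (q ^ n)
      + (\<Sum>j\<in>{1..J}. a j * y ^ (q ^ (n - 2 * j)) + a j ^ (q ^ (n + 2 * j)) * y ^ (q ^ (n + 2 * j)))"

lemma tr_twisted_term_eq:
  assumes "j \<le> J"
  shows "tr (b ^ q * x ^ (q ^ (n - 2 * j + 1)) * y ^ q)
    = tr (x * (b ^ (q ^ (n + 2 * j)) * y ^ (q ^ (n + 2 * j))))"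
proof -
  let ?m = "N + j"
  have "tr (b ^ q * x ^ (q ^ (n - 2 * j + 1)) * y ^ q)
      = tr ((b ^ q * x ^ (q ^ (n - 2 * j + 1)) * y ^ q) ^ (q ^ (2 * ?m)))"
    by (rule tr_power_q_power_even[symmetric])
  also have "(b ^ q * x ^ (q ^ (n - 2 * j + 1)) * y ^ q) ^ (q ^ (2 * ?m))
      = b ^ (q ^ Suc (2 * ?m)) * x ^ (q ^ (n - 2 * j + 1 + 2 * ?m)) * y ^ (q ^ Suc (2 * ?m))"
    by (simp only: power_mult_distrib power_q_power_power_Suc power_power_power_add)
  also have "Suc (2 * ?m) = n + 2 * j" using n_eq by simp
  also have "x ^ (q ^ (n - 2 * j + 1 + 2 * ?m)) = x"
    using n_eq assms J_le_N by (intro power_q_power_eq_self) simp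
  finally show ?thesis by (simp add: mult_ac)
qed

lemma Hform_eq_tr_mult_Hadj:
  fixes a :: "nat \<Rightarrow> 'a"
  shows "Hform q n d a x y = tr (x * Hadj a y)"
proof -
  have "Hform q n d a x y = tr (a 0 * x * y ^ (q ^ n))
      + (\<Sum>j\<in>{1..J}. tr (a j * x * y ^ (q ^ (n - 2 * j))) + tr (a j ^ q * x ^ (q ^ (n - 2 * j + 1)) * y ^ q))"
    unfolding Hform_eq_tr_Hsum Hsum_def by (simp add: tr_add tr_sum)
  also have "\<dots> = tr (x * (a 0 * y ^ (q ^ n)))
      + (\<Sum>j\<in>{1..J}. tr (x * (a j * y ^ (q ^ (n - 2 * j))))
          + tr (x * (a j ^ (q ^ (n + 2 * j)) * y ^ (q ^ (n + 2 * j)))))"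
  proof (intro arg_cong2[where f = "(+)"] sum.cong refl)
    show "tr (a 0 * x * y ^ (q ^ n)) = tr (x * (a 0 * y ^ (q ^ n)))"
      by (simp only: mult_ac)
    fix j assume "j \<in> {1..J}"
    show "tr (a j * x * y ^ (q ^ (n - 2 * j))) = tr (x * (a j * y ^ (q ^ (n - 2 * j))))"
      by (simp only: mult_ac)
    show "tr (a j ^ q * x ^ (q ^ (n - 2 * j + 1)) * y ^ q)
        = tr (x * (a j ^ (q ^ (n + 2 * j)) * y ^ (q ^ (n + 2 * j))))"
      using \<open>j \<in> {1..J}\<close> by (intro tr_twisted_term_eq) simp
  qed
  also have "\<dots> = tr (x * Hadj a y)"
    unfolding Hadj_def by (simp add: tr_add tr_sum distrib_left sum_distrib_left)
  finally show ?thesis .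
qed

lemma Hform_in_Fq2:
  fixes a :: "nat \<Rightarrow> 'a"
  shows "Hform q n d a x y \<in> Fq2"
  unfolding Hform_eq_tr_Hsum by (rule tr_in_Fq2)

lemma Hform_add_left:
  fixes a :: "nat \<Rightarrow> 'a"
  shows "Hform q n d a (x + x') y = Hform q n d a x y + Hform q n d a x' y"
proof -
  have "Hsum a (x + x') y = Hsum a x y + Hsum a x' y"
    unfolding Hsum_def by (simp only: frobenius_add) (simp add: algebra_simps sum.distrib)
  thus ?thesis by (simp add: Hform_eq_tr_Hsum tr_add)
qed

lemma Hform_mult_left:
  fixes a :: "nat \<Rightarrow> 'a"
  assumes "c \<in> Fq2"
  shows "Hform q n d a (c * x) y = c * Hform q n d a x y"
proof -
  have "(\<Sum>j\<in>{1..J}. a j * (c * x) * y ^ (q ^ (n - 2 * j)) + a j ^ q * (c * x) ^ (q ^ (n - 2 * j + 1)) * y ^ q)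
     = (\<Sum>j\<in>{1..J}. c * (a j * x * y ^ (q ^ (n - 2 * j)) + a j ^ q * x ^ (q ^ (n - 2 * j + 1)) * y ^ q))"
  proof (rule sum.cong[OF refl])
    fix j assume "j \<in> {1..J}"
    hence "n - 2 * j + 1 = 2 * (N - j + 1)" using n_eq J_le_N by auto
    hence "c ^ (q ^ (n - 2 * j + 1)) = c" using Fq2_power_q_power_even[OF assms] by metis
    hence "(c * x) ^ (q ^ (n - 2 * j + 1)) = c * x ^ (q ^ (n - 2 * j + 1))"
      by (simp only: power_mult_distrib)
    thus "a j * (c * x) * y ^ (q ^ (n - 2 * j)) + a j ^ q * (c * x) ^ (q ^ (n - 2 * j + 1)) * y ^ q
        = c * (a j * x * y ^ (q ^ (n - 2 * j)) + a j ^ q * x ^ (q ^ (n - 2 * j + 1)) * y ^ q)"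
      by (simp only: algebra_simps)
  qed
  hence "Hsum a (c * x) y = c * Hsum a x y"
    unfolding Hsum_def by (simp add: distrib_left sum_distrib_left[symmetric] mult_ac)
  thus ?thesis by (simp add: Hform_eq_tr_Hsum tr_mult_Fq2[OF assms])
qed

lemma tr_power_q_Hsum_head:
  assumes "a ^ (q ^ n) = a"
  shows "tr ((a * x * y ^ (q ^ n)) ^ q) = tr (a * y * x ^ (q ^ n))"
proof -
  have "tr ((a * x * y ^ (q ^ n)) ^ q) = tr (((a * x * y ^ (q ^ n)) ^ q) ^ (q ^ (2 * N)))"
    by (rule tr_power_q_power_even[symmetric])
  also have "((a * x * y ^ (q ^ n)) ^ q) ^ (q ^ (2 * N))
     = a ^ (q ^ Suc (2 * N)) * x ^ (q ^ Suc (2 * N)) * y ^ (q ^ (Suc n + 2 * N))"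
    by (simp only: power_mult_distrib power_q_power_power_Suc power_power_power_add)
  also have "Suc (2 * N) = n" using n_eq by simp
  also have "y ^ (q ^ (Suc n + 2 * N)) = y"
    using n_eq by (intro power_q_power_eq_self) simp
  finally show ?thesis using assms by (simp only: mult_ac)
qed

lemma tr_power_q_Hsum_term:
  "tr ((b * x * y ^ (q ^ e)) ^ q) = tr (b ^ q * y ^ (q ^ (e + 1)) * x ^ q)"
proof -
  have "(b * x * y ^ (q ^ e)) ^ q = b ^ q * x ^ q * y ^ (q ^ Suc e)"
    by (simp only: power_mult_distrib power_q_power_power_Suc)
  thus ?thesis by (simp only: mult_ac Suc_eq_plus1)
qed

lemma tr_power_q_Hsum_twisted_term:
  assumes "2 * j \<le> n"
  shows "tr ((b ^ q * x ^ (q ^ (n - 2 * j + 1)) * y ^ q) ^ q) = tr (b * y * x ^ (q ^ (n - 2 * j)))"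
proof -
  have "tr ((b ^ q * x ^ (q ^ (n - 2 * j + 1)) * y ^ q) ^ q)
      = tr (((b ^ q * x ^ (q ^ (n - 2 * j + 1)) * y ^ q) ^ q) ^ (q ^ (2 * (n - 1))))"
    by (rule tr_power_q_power_even[symmetric])
  also have "((b ^ q * x ^ (q ^ (n - 2 * j + 1)) * y ^ q) ^ q) ^ (q ^ (2 * (n - 1)))
     = b ^ (q ^ (2 + 2 * (n - 1))) * x ^ (q ^ (Suc (n - 2 * j + 1) + 2 * (n - 1)))
       * y ^ (q ^ (2 + 2 * (n - 1)))"
    by (simp only: power_mult_distrib power_q_power_q power_q_power_power_Suc power_power_power_add)
  also have "b ^ (q ^ (2 + 2 * (n - 1))) = b"
    using n_pos by (intro power_q_power_eq_self) simp
  also have "y ^ (q ^ (2 + 2 * (n - 1))) = y"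
    using n_pos by (intro power_q_power_eq_self) simp
  also have "x ^ (q ^ (Suc (n - 2 * j + 1) + 2 * (n - 1))) = x ^ (q ^ (n - 2 * j))"
    using n_pos assms by (intro power_q_power_periodic) simp
  finally show ?thesis by (simp only: mult_ac)
qed

lemma Hform_hermitian_sym:
  fixes a :: "nat \<Rightarrow> 'a"
  assumes a0: "a 0 ^ (q ^ n) = a 0"
  shows "Hform q n d a y x = Hform q n d a x y ^ q"
proof -
  have "Hform q n d a x y ^ q = tr (Hsum a x y ^ q)"
    by (simp only: Hform_eq_tr_Hsum tr_power_q)
  also have "\<dots> = tr ((a 0 * x * y ^ (q ^ n)) ^ q)
      + (\<Sum>j\<in>{1..J}. tr ((a j * x * y ^ (q ^ (n - 2 * j))) ^ q)
          + tr ((a j ^ q * x ^ (q ^ (n - 2 * j + 1)) * y ^ q) ^ q))"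
    unfolding Hsum_def by (simp only: frobenius_q_add frobenius_q_sum tr_add tr_sum)
  also have "\<dots> = tr (a 0 * y * x ^ (q ^ n))
      + (\<Sum>j\<in>{1..J}. tr (a j * y * x ^ (q ^ (n - 2 * j))) + tr (a j ^ q * y ^ (q ^ (n - 2 * j + 1)) * x ^ q))"
  proof (rule arg_cong2[where f = "(+)"], rule tr_power_q_Hsum_head[OF a0], rule sum.cong[OF refl])
    fix j assume "j \<in> {1..J}"
    hence "2 * j \<le> n" using J_le_N n_eq by auto
    show "tr ((a j * x * y ^ (q ^ (n - 2 * j))) ^ q) + tr ((a j ^ q * x ^ (q ^ (n - 2 * j + 1)) * y ^ q) ^ q)
        = tr (a j * y * x ^ (q ^ (n - 2 * j))) + tr (a j ^ q * y ^ (q ^ (n - 2 * j + 1)) * x ^ q)"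
      unfolding tr_power_q_Hsum_term tr_power_q_Hsum_twisted_term[OF \<open>2 * j \<le> n\<close>]
      by (rule add.commute)
  qed
  also have "\<dots> = Hform q n d a y x"
    unfolding Hform_eq_tr_Hsum Hsum_def by (simp only: tr_add tr_sum)
  finally show ?thesis by simp
qed

lemma hermitian_form_Hform:
  fixes a :: "nat \<Rightarrow> 'a"
  assumes "a 0 ^ (q ^ n) = a 0"
  shows "hermitian_form q (Hform q n d a)"
  unfolding hermitian_form_def
  using Hform_in_Fq2 Hform_add_left Hform_mult_left Hform_hermitian_sym[where a = a, OF assms] by blast

lemma Hform_diff_param:
  fixes a b :: "nat \<Rightarrow> 'a"
  shows "Hform q n d (\<lambda>k. a k - b k) x y = Hform q n d a x y - Hform q n d b x y"
proof -
  have frobenius_q_diff: "(u - v) ^ q = u ^ q - v ^ q" for u v :: 'a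
    using frobenius_diff[of u v 1] by simp
  have "Hsum (\<lambda>k. a k - b k) x y = Hsum a x y - Hsum b x y"
    unfolding Hsum_def by (simp only: frobenius_q_diff) (simp add: algebra_simps sum_subtractf)
  thus ?thesis by (simp add: Hform_eq_tr_Hsum tr_diff)
qed

lemma Hform_add_param:
  fixes a b :: "nat \<Rightarrow> 'a"
  shows "Hform q n d (\<lambda>k. a k + b k) x y = Hform q n d a x y + Hform q n d b x y"
proof -
  have "Hsum (\<lambda>k. a k + b k) x y = Hsum a x y + Hsum b x y"
    unfolding Hsum_def by (simp only: frobenius_q_add) (simp add: algebra_simps sum.distrib)
  thus ?thesis by (simp add: Hform_eq_tr_Hsum tr_add)
qed

lemma Hform_zero_param: "Hform q n d (\<lambda>k. 0 :: 'a) x y = 0"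
  using Hform_diff_param[of "\<lambda>k. 0" "\<lambda>k. 0" x y] by simp

lemma Hform_uminus_param:
  fixes a :: "nat \<Rightarrow> 'a"
  shows "Hform q n d (\<lambda>k. - a k) x y = - Hform q n d a x y"
  using Hform_diff_param[of "\<lambda>k. 0" a x y] Hform_zero_param by simp

lemma Hform_cong_param:
  fixes a b :: "nat \<Rightarrow> 'a"
  assumes "\<And>k. k \<le> J \<Longrightarrow> a k = b k"
  shows "Hform q n d a = Hform q n d b"
proof (intro ext)
  fix x y :: 'a
  have "Hsum a x y = Hsum b x y"
    unfolding Hsum_def using assms by (intro arg_cong2[where f = "(+)"] sum.cong) auto
  thus "Hform q n d a x y = Hform q n d b x y" by (simp add: Hform_eq_tr_Hsum)
qed

lemma Hform_zero_left:
  fixes a :: "nat \<Rightarrow> 'a"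
  shows "Hform q n d a 0 y = 0"
  using Hform_mult_left[where a = a and c = 0 and x = 0 and y = y] Fq2.zero_mem by simp

lemma Hform_sum_left:
  fixes a :: "nat \<Rightarrow> 'a"
  shows "Hform q n d a (sum f A) y = (\<Sum>i\<in>A. Hform q n d a (f i) y)"
  by (induction A rule: infinite_finite_induct) (simp_all add: Hform_zero_left Hform_add_left)

lemma Hform_sum_mult_left:
  fixes a :: "nat \<Rightarrow> 'a"
  assumes "\<And>i. i \<in> A \<Longrightarrow> c i \<in> Fq2"
  shows "Hform q n d a (\<Sum>i\<in>A. c i * x i) y = (\<Sum>i\<in>A. c i * Hform q n d a (x i) y)"
  using assms by (simp add: Hform_sum_left Hform_mult_left)

lemma Hform_sum_mult_right:
  fixes a :: "nat \<Rightarrow> 'a"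
  assumes a0: "a 0 ^ (q ^ n) = a 0" and "\<And>i. i \<in> A \<Longrightarrow> c i \<in> Fq2"
  shows "Hform q n d a x (\<Sum>i\<in>A. c i * y i) = (\<Sum>i\<in>A. c i ^ q * Hform q n d a x (y i))"
proof -
  have "Hform q n d a x (\<Sum>i\<in>A. c i * y i) = Hform q n d a (\<Sum>i\<in>A. c i * y i) x ^ q"
    by (rule Hform_hermitian_sym[where a = a, OF a0])
  also have "\<dots> = (\<Sum>i\<in>A. c i * Hform q n d a (y i) x) ^ q"
    using assms(2) by (simp add: Hform_sum_mult_left)
  also have "\<dots> = (\<Sum>i\<in>A. c i ^ q * Hform q n d a (y i) x ^ q)"
    by (simp add: frobenius_q_sum power_mult_distrib)
  also have "\<dots> = (\<Sum>i\<in>A. c i ^ q * Hform q n d a x (y i))"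
    by (simp only: Hform_hermitian_sym[where a = a, OF a0, symmetric])
  finally show ?thesis .
qed

definition radical :: "(nat \<Rightarrow> 'a) \<Rightarrow> 'a set" where
  "radical a = {y. \<forall>x. Hform q n d a x y = 0}"

lemma radical_subset_Hadj_roots:
  fixes a :: "nat \<Rightarrow> 'a"
  shows "radical a \<subseteq> {y. Hadj a y = 0}"
proof
  fix y assume "y \<in> radical a"
  hence "tr (x * Hadj a y) = 0" for x
    by (simp add: radical_def Hform_eq_tr_mult_Hadj)
  thus "y \<in> {y. Hadj a y = 0}" using tr_nondegenerate by blast
qed

text \<open>Raising \<open>L\<^sub>a(y)\<close> to the power \<open>q\<^sup>n\<^sup>+\<^sup>2\<^sup>J\<close> shifts all its exponents into
  \<open>q\<^sup>0, q\<^sup>2, \<dots>, q\<^sup>4\<^sup>J\<close>, so the root bound for \<open>q\<close>-polynomials applies.\<close>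

lemma Hadj_power_q_power:
  fixes a :: "nat \<Rightarrow> 'a"
  defines "E \<equiv> n + 2 * J"
  shows "Hadj a y ^ (q ^ E) = a 0 ^ (q ^ E) * y ^ (q ^ (2 * J))
     + (\<Sum>j\<in>{1..J}. a j ^ (q ^ E) * y ^ (q ^ (2 * (J - j)))
           + (a j ^ (q ^ (n + 2 * j))) ^ (q ^ E) * y ^ (q ^ (2 * (J + j))))"
proof -
  have "Hadj a y ^ (q ^ E) = a 0 ^ (q ^ E) * y ^ (q ^ (n + E))
     + (\<Sum>j\<in>{1..J}. a j ^ (q ^ E) * y ^ (q ^ (n - 2 * j + E))
           + (a j ^ (q ^ (n + 2 * j))) ^ (q ^ E) * y ^ (q ^ (n + 2 * j + E)))"
    unfolding Hadj_def by (simp only: frobenius_add frobenius_sum power_mult_distrib power_power_power_add)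
  also have "y ^ (q ^ (n + E)) = y ^ (q ^ (2 * J))"
    unfolding E_def by (intro power_q_power_periodic) simp
  also have "(\<Sum>j\<in>{1..J}. a j ^ (q ^ E) * y ^ (q ^ (n - 2 * j + E))
           + (a j ^ (q ^ (n + 2 * j))) ^ (q ^ E) * y ^ (q ^ (n + 2 * j + E)))
     = (\<Sum>j\<in>{1..J}. a j ^ (q ^ E) * y ^ (q ^ (2 * (J - j)))
           + (a j ^ (q ^ (n + 2 * j))) ^ (q ^ E) * y ^ (q ^ (2 * (J + j))))"
  proof (rule sum.cong[OF refl])
    fix j assume j: "j \<in> {1..J}"
    have "y ^ (q ^ (n - 2 * j + E)) = y ^ (q ^ (2 * (J - j)))"
      unfolding E_def using j J_le_N n_eq by (intro power_q_power_periodic) auto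
    moreover have "y ^ (q ^ (n + 2 * j + E)) = y ^ (q ^ (2 * (J + j)))"
      unfolding E_def using j by (intro power_q_power_periodic) auto
    ultimately show "a j ^ (q ^ E) * y ^ (q ^ (n - 2 * j + E)) + (a j ^ (q ^ (n + 2 * j))) ^ (q ^ E) * y ^ (q ^ (n + 2 * j + E))
        = a j ^ (q ^ E) * y ^ (q ^ (2 * (J - j))) + (a j ^ (q ^ (n + 2 * j))) ^ (q ^ E) * y ^ (q ^ (2 * (J + j)))"
      by (simp only:)
  qed
  finally show ?thesis .
qed

lemma card_radical_le:
  fixes a :: "nat \<Rightarrow> 'a"
  assumes "i \<le> J" and "a i \<noteq> 0"
  shows "card (radical a) \<le> q ^ (2 * (n - d))"
proof -
  define E where "E = n + 2 * J"
  define b where "b k = (if k = J then a 0 ^ (q ^ E) else if k < J then a (J - k) ^ (q ^ E)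
      else (a (k - J) ^ (q ^ (n + 2 * (k - J)))) ^ (q ^ E))" for k
  have Hadj_power: "Hadj a y ^ (q ^ E) = (\<Sum>k\<le>2 * J. b k * y ^ (q ^ (2 * k)))" for y
    unfolding Hadj_power_q_power E_def b_def by (rule sum_centered_reindex)
  have "radical a \<subseteq> {y. (\<Sum>k\<le>2 * J. b k * y ^ (q ^ (2 * k))) = 0}"
    using radical_subset_Hadj_roots q_ge_2 by (auto simp: Hadj_power[symmetric])
  moreover have "b (if i = 0 then J else J - i) \<noteq> 0"
    using assms by (auto simp: b_def)
  hence "card {y. (\<Sum>k\<le>2 * J. b k * y ^ (q ^ (2 * k))) = 0} \<le> q ^ (2 * (2 * J))"
    using q_ge_2 by (intro card_roots_q_polynomial_le) (auto simp: inj_on_def)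
  ultimately have "card (radical a) \<le> q ^ (2 * (2 * J))"
    by (meson card_mono finite le_trans)
  thus ?thesis using n_minus_d_eq by simp
qed

abbreviation gram :: "(nat \<Rightarrow> 'a) \<Rightarrow> (nat \<Rightarrow> 'a) \<Rightarrow> 'a mat" where
  "gram \<xi> a \<equiv> form_matrix n \<xi> (Hform q n d a)"

lemma gram_carrier: "gram \<xi> a \<in> carrier_mat n n"
  by (simp add: form_matrix_def)

lemma gram_index: "i < n \<Longrightarrow> j < n \<Longrightarrow> gram \<xi> a $$ (i, j) = Hform q n d a (\<xi> i) (\<xi> j)"
  by (simp add: form_matrix_def)

lemma gram_diff: "gram \<xi> (\<lambda>k. a k - b k) = gram \<xi> a - gram \<xi> b"
  by (rule eq_matI) (simp_all add: form_matrix_def Hform_diff_param)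

lemma gram_add: "gram \<xi> (\<lambda>k. a k + b k) = gram \<xi> a + gram \<xi> b"
  by (rule eq_matI) (simp_all add: form_matrix_def Hform_add_param)

lemma gram_uminus: "gram \<xi> (\<lambda>k. - a k) = - gram \<xi> a"
  by (rule eq_matI) (simp_all add: form_matrix_def Hform_uminus_param)

lemma gram_zero: "gram \<xi> (\<lambda>k. 0) = 0\<^sub>m n n"
  by (rule eq_matI) (simp_all add: form_matrix_def Hform_zero_param)

lemma gram_in_hermitian_mats:
  fixes a :: "nat \<Rightarrow> 'a"
  assumes "a 0 ^ (q ^ n) = a 0"
  shows "gram \<xi> a \<in> hermitian_mats n q"
  unfolding hermitian_mats_def
proof (intro CollectI conjI gram_carrier allI impI)
  fix i j assume "i < n" "j < n"
  thus "gram \<xi> a $$ (i, j) \<in> Fq2" by (simp add: gram_index Hform_in_Fq2)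
  show "gram \<xi> a $$ (j, i) = gram \<xi> a $$ (i, j) ^ q"
    unfolding gram_index[OF \<open>i < n\<close> \<open>j < n\<close>] gram_index[OF \<open>j < n\<close> \<open>i < n\<close>]
    by (rule Hform_hermitian_sym[where a = a, OF assms])
qed

lemma is_basis_iff_basis_over: "is_basis q n \<xi> \<longleftrightarrow> basis_over Fq2 n \<xi>"
  by (simp add: is_basis_def basis_over_def)

text \<open>A kernel vector \<open>v\<close> of the Gram matrix over \<open>F\<^sub>q\<^sub>2\<close> gives the radical element
  \<open>\<Sum> v\<^sub>j\<^sup>q \<xi>\<^sub>j\<close>; the twist by \<open>q\<close> compensates for the semilinearity in the second argument.\<close>

definition radical_vector :: "(nat \<Rightarrow> 'a) \<Rightarrow> 'a vec \<Rightarrow> 'a" where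
  "radical_vector \<xi> v = (\<Sum>j<n. (v $ j) ^ q * \<xi> j)"

lemma Fq2_power_q_power_q: "c \<in> Fq2 \<Longrightarrow> (c ^ q) ^ q = c"
  by (simp add: subfield_of_order_def power_q_power_q)

lemma Fq2_power_q_mem:
  assumes "c \<in> Fq2"
  shows "c ^ q \<in> Fq2"
proof -
  have "(c ^ q) ^ (q ^ 2) = (c ^ (q ^ 2)) ^ q"
    by (simp only: power_mult[symmetric] mult.commute)
  thus ?thesis using assms by (simp add: subfield_of_order_def)
qed

lemma radical_vector_mem_radical:
  fixes a :: "nat \<Rightarrow> 'a"
  assumes a0: "a 0 ^ (q ^ n) = a 0" and basis: "is_basis q n \<xi>"
    and v: "v \<in> vecs_over Fq2 n" and kernel: "gram \<xi> a *\<^sub>v v = 0\<^sub>v n"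
  shows "radical_vector \<xi> v \<in> radical a"
proof -
  have v_mem: "v $ j \<in> Fq2" if "j < n" for j
    using v that by (simp add: vecs_over_def)
  have on_basis: "Hform q n d a (\<xi> i) (radical_vector \<xi> v) = 0" if "i < n" for i
  proof -
    have "Hform q n d a (\<xi> i) (radical_vector \<xi> v) = (\<Sum>j<n. ((v $ j) ^ q) ^ q * Hform q n d a (\<xi> i) (\<xi> j))"
      unfolding radical_vector_def using v_mem Fq2_power_q_mem
      by (intro Hform_sum_mult_right[where a = a, OF a0]) simp
    also have "\<dots> = (gram \<xi> a *\<^sub>v v) $ i"
      using v that v_mem by (auto simp: vecs_over_def Fq2_power_q_power_q gram_index form_matrix_def
          scalar_prod_def atLeast0LessThan mult.commute intro!: sum.cong)
    finally show ?thesis using kernel that by simp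
  qed
  show ?thesis unfolding radical_def
  proof (intro CollectI allI)
    fix x
    obtain c where c: "\<forall>i<n. c i \<in> Fq2" "x = (\<Sum>i<n. c i * \<xi> i)"
      using basis unfolding is_basis_def by blast
    have "Hform q n d a (\<Sum>i<n. c i * \<xi> i) (radical_vector \<xi> v)
        = (\<Sum>i<n. c i * Hform q n d a (\<xi> i) (radical_vector \<xi> v))"
      using c(1) by (intro Hform_sum_mult_left) simp
    thus "Hform q n d a x (radical_vector \<xi> v) = 0"
      using on_basis c(2) by simp
  qed
qed

lemma inj_on_radical_vector:
  assumes basis: "is_basis q n \<xi>"
  shows "inj_on (radical_vector \<xi>) (vecs_over Fq2 n)"
proof (rule inj_onI)
  fix u v assume u: "u \<in> vecs_over Fq2 n" and v: "v \<in> vecs_over Fq2 n"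
    and eq: "radical_vector \<xi> u = radical_vector \<xi> v"
  have mem: "u $ j \<in> Fq2" "v $ j \<in> Fq2" if "j < n" for j
    using u v that by (simp_all add: vecs_over_def)
  have "(\<Sum>j<n. ((u $ j) ^ q - (v $ j) ^ q) * \<xi> j) = radical_vector \<xi> u - radical_vector \<xi> v"
    by (simp add: radical_vector_def left_diff_distrib sum_subtractf)
  hence "(\<Sum>j<n. ((u $ j) ^ q - (v $ j) ^ q) * \<xi> j) = 0"
    using eq by simp
  moreover have "\<forall>j<n. (u $ j) ^ q - (v $ j) ^ q \<in> Fq2"
    using mem by (blast intro: Fq2.diff_mem Fq2_power_q_mem)
  ultimately have "(u $ j) ^ q - (v $ j) ^ q = 0" if "j < n" for j
    using Fq2.basis_over_coordinates_eq_0[OF basis[unfolded is_basis_iff_basis_over],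
        of "\<lambda>j. (u $ j) ^ q - (v $ j) ^ q"] that by blast
  hence "((u $ j) ^ q) ^ q = ((v $ j) ^ q) ^ q" if "j < n" for j
    using that by simp
  hence "u $ j = v $ j" if "j < n" for j
    using that mem by (simp add: Fq2_power_q_power_q)
  thus "u = v"
    using u v by (intro eq_vecI) (simp_all add: vecs_over_def)
qed

lemma rank_gram_ge:
  fixes a :: "nat \<Rightarrow> 'a"
  assumes a0: "a 0 ^ (q ^ n) = a 0" and "i \<le> J" "a i \<noteq> 0" and basis: "is_basis q n \<xi>"
  shows "d \<le> mrank n (gram \<xi> a)"
proof -
  have "card {v \<in> vecs_over Fq2 n. gram \<xi> a *\<^sub>v v = 0\<^sub>v n} \<le> card (radical a)"
    using inj_on_radical_vector[OF basis] radical_vector_mem_radical[where a = a, OF a0 basis]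
    by (intro card_inj_on_le[where f = "radical_vector \<xi>"]) (auto intro: inj_on_subset)
  also have "\<dots> \<le> card Fq2 ^ (n - d)"
    using card_radical_le[where a = a, OF assms(2,3)] by (simp add: card_Fq2 power_mult)
  finally show ?thesis
    unfolding mrank_def
    using basis d_le_n Hform_in_Fq2
    by (intro Fq2.rank_ge_if_card_kernel_le[OF _ gram_carrier])
      (simp_all add: is_basis_iff_basis_over gram_index)
qed

abbreviation params :: "(nat \<Rightarrow> 'a) set" where
  "params \<equiv> {a. a 0 \<in> subfield_of_order (q ^ n)}"

lemma params_diff_mem: "a \<in> params \<Longrightarrow> b \<in> params \<Longrightarrow> (\<lambda>k. a k - b k) \<in> params"
  by (simp add: subfield_of_order_def frobenius_diff)

lemma params_add_mem: "a \<in> params \<Longrightarrow> b \<in> params \<Longrightarrow> (\<lambda>k. a k + b k) \<in> params"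
  by (simp add: subfield_of_order_def frobenius_add)

lemma params_uminus_mem: "a \<in> params \<Longrightarrow> (\<lambda>k. - a k) \<in> params"
  by (simp add: subfield_of_order_def frobenius_minus)

lemma params_zero_mem: "(\<lambda>k. 0) \<in> params"
  using q_ge_2 by (simp add: subfield_of_order_def)

lemma rank_gram_diff_ge:
  assumes "is_basis q n \<xi>" and "a \<in> params" "b \<in> params" and "k \<le> J" "a k \<noteq> b k"
  shows "d \<le> mrank n (gram \<xi> a - gram \<xi> b)"
proof -
  have "(\<lambda>k. a k - b k) \<in> params" using assms(2,3) by (rule params_diff_mem)
  hence "d \<le> mrank n (gram \<xi> (\<lambda>k. a k - b k))"
    using assms(1,4,5) by (intro rank_gram_ge[where i = k]) (simp_all add: subfield_of_order_def)
  thus ?thesis by (simp only: gram_diff)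
qed

lemma d_code_gram_image:
  assumes "is_basis q n \<xi>"
  shows "d_code n q d (gram \<xi> ` params)"
  unfolding d_code_def
proof (intro conjI ballI impI)
  have "gram \<xi> (\<lambda>k. 0) \<in> gram \<xi> ` params" by (rule imageI[OF params_zero_mem])
  thus "gram \<xi> ` params \<noteq> {}" by auto
  show "gram \<xi> ` params \<subseteq> hermitian_mats n q"
  proof (rule image_subsetI)
    fix a :: "nat \<Rightarrow> 'a" assume "a \<in> params"
    thus "gram \<xi> a \<in> hermitian_mats n q"
      by (intro gram_in_hermitian_mats) (simp add: subfield_of_order_def)
  qed
  fix A B assume "A \<in> gram \<xi> ` params" "B \<in> gram \<xi> ` params" "A \<noteq> B"
  then obtain a b where ab: "a \<in> params" "b \<in> params" "A = gram \<xi> a" "B = gram \<xi> b"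
    by blast
  have "\<exists>k\<le>J. a k \<noteq> b k"
  proof (rule ccontr)
    assume "\<not> (\<exists>k\<le>J. a k \<noteq> b k)"
    hence "Hform q n d a = Hform q n d b" by (intro Hform_cong_param) blast
    thus False using ab \<open>A \<noteq> B\<close> by simp
  qed
  then obtain k where "k \<le> J" "a k \<noteq> b k" by blast
  thus "d \<le> mrank n (A - B)"
    using rank_gram_diff_ge[OF assms ab(1,2)] ab(3,4) by simp
qed

lemma additive_code_gram_image: "additive_code n (gram \<xi> ` params)"
  unfolding additive_code_def
proof (intro conjI ballI)
  show "0\<^sub>m n n \<in> gram \<xi> ` params"
    unfolding gram_zero[of \<xi>, symmetric] using params_zero_mem by (rule imageI)
  fix A B assume "A \<in> gram \<xi> ` params" "B \<in> gram \<xi> ` params"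
  then obtain a b where ab: "a \<in> params" "b \<in> params" "A = gram \<xi> a" "B = gram \<xi> b"
    by blast
  have "gram \<xi> (\<lambda>k. a k + b k) \<in> gram \<xi> ` params"
    by (rule imageI[OF params_add_mem[OF ab(1,2)]])
  thus "A + B \<in> gram \<xi> ` params" by (simp only: gram_add ab(3,4))
next
  fix A assume "A \<in> gram \<xi> ` params"
  then obtain a where a: "a \<in> params" "A = gram \<xi> a" by blast
  have "gram \<xi> (\<lambda>k. - a k) \<in> gram \<xi> ` params"
    by (rule imageI[OF params_uminus_mem[OF a(1)]])
  thus "- A \<in> gram \<xi> ` params" by (simp only: gram_uminus a(2))
qed

text \<open>Only \<open>a\<^sub>0, \<dots>, a\<^sub>J\<close> enter the form, so the code is parametrized by the
  truncated parameter families.\<close>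

abbreviation truncated_params :: "(nat \<Rightarrow> 'a) set" where
  "truncated_params \<equiv> {a \<in> params. \<forall>k>J. a k = 0}"

lemma gram_image_truncated_params: "gram \<xi> ` truncated_params = gram \<xi> ` params"
proof
  show "gram \<xi> ` truncated_params \<subseteq> gram \<xi> ` params"
    by (intro image_mono Collect_restrict)
  show "gram \<xi> ` params \<subseteq> gram \<xi> ` truncated_params"
  proof (rule image_subsetI)
    fix a :: "nat \<Rightarrow> 'a" assume "a \<in> params"
    define t where "t k = (if k \<le> J then a k else 0)" for k
    have "t \<in> truncated_params" using \<open>a \<in> params\<close> by (simp add: t_def)
    hence "gram \<xi> t \<in> gram \<xi> ` truncated_params" by (rule imageI)
    moreover have "Hform q n d t = Hform q n d a" by (rule Hform_cong_param) (simp add: t_def)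
    ultimately show "gram \<xi> a \<in> gram \<xi> ` truncated_params" by simp
  qed
qed

lemma inj_on_gram_truncated_params:
  assumes "is_basis q n \<xi>"
  shows "inj_on (gram \<xi>) truncated_params"
proof (rule inj_onI, rule ccontr)
  fix a b assume a: "a \<in> truncated_params" and b: "b \<in> truncated_params"
    and "gram \<xi> a = gram \<xi> b" and "a \<noteq> b"
  then obtain k where "a k \<noteq> b k" by blast
  moreover have "k \<le> J"
  proof (rule ccontr)
    assume "\<not> k \<le> J"
    hence "a k = 0" "b k = 0" using a b by simp_all
    thus False using \<open>a k \<noteq> b k\<close> by simp
  qed
  ultimately have "d \<le> mrank n (gram \<xi> a - gram \<xi> b)"
    using a b by (intro rank_gram_diff_ge[OF assms]) simp_all
  also have "gram \<xi> a - gram \<xi> b = 0\<^sub>m n n"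
    using \<open>gram \<xi> a = gram \<xi> b\<close> by (intro eq_matI) (simp_all add: form_matrix_def)
  moreover have "vec_space.rank n (0\<^sub>m n n :: 'a mat) = 0"
    by (rule vec_space.rank_0I)
  ultimately show False
    using d_pos by (simp add: mrank_def)
qed

lemma card_truncated_params: "card truncated_params = q ^ (n * (n - d + 1))"
proof -
  define B where "B k = (if k = 0 then subfield_of_order (q ^ n) else (UNIV :: 'a set))" for k :: nat
  have "bij_betw (\<lambda>f k. if k \<le> J then f k else 0) (PiE {..J} B) truncated_params"
  proof (rule bij_betw_byWitness[where f' = "\<lambda>a. restrict a {..J}"])
    show "\<forall>f\<in>PiE {..J} B. restrict (\<lambda>k. if k \<le> J then f k else 0) {..J} = f"
      by (auto simp: PiE_def extensional_def)
    show "\<forall>a\<in>truncated_params. (\<lambda>k. if k \<le> J then restrict a {..J} k else 0) = a"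
      by (auto simp: not_le)
    show "(\<lambda>f k. if k \<le> J then f k else 0) ` PiE {..J} B \<subseteq> truncated_params"
      by (auto simp: B_def PiE_def Pi_def)
    show "(\<lambda>a. restrict a {..J}) ` truncated_params \<subseteq> PiE {..J} B"
    proof (rule image_subsetI)
      fix a :: "nat \<Rightarrow> 'a" assume "a \<in> truncated_params"
      thus "restrict a {..J} \<in> PiE {..J} B"
        unfolding restrict_PiE_iff by (simp add: B_def)
    qed
  qed
  hence "card truncated_params = (\<Prod>k\<le>J. card (B k))"
    by (simp add: bij_betw_same_card[symmetric] card_PiE)
  also have "\<dots> = (\<Prod>k\<le>J. if k = 0 then q ^ n else q ^ (2 * n))"
    using card_subfield_of_order[of n] n_pos card_UNIV by (intro prod.cong) (simp_all add: B_def)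
  also have "\<dots> = q ^ n * (q ^ (2 * n)) ^ J"
  proof -
    have "(\<Prod>k\<le>m. if k = 0 then x else y) = x * y ^ m" for m x y :: nat
      by (induction m) (simp_all add: atMost_Suc mult_ac)
    thus ?thesis .
  qed
  also have "\<dots> = q ^ (n * (n - d + 1))"
    using n_minus_d_eq d_le_n by (simp add: power_mult[symmetric] power_add[symmetric] algebra_simps)
  finally show ?thesis .
qed

lemma card_gram_image:
  assumes "is_basis q n \<xi>"
  shows "card (gram \<xi> ` params) = q ^ (n * (n - d + 1))"
proof -
  have "card (gram \<xi> ` params) = card (gram \<xi> ` truncated_params)"
    by (simp only: gram_image_truncated_params)
  also have "\<dots> = card truncated_params"
    by (rule card_image[OF inj_on_gram_truncated_params[OF assms]])
  finally show ?thesis by (simp only: card_truncated_params)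
qed

end

theorem theorem4p2:
  fixes q n d :: nat and \<xi> :: "nat \<Rightarrow> 'a::{field,finite}"
  assumes "prime_power q"
    and "odd n" and "odd d" and "1 \<le> d" and "d \<le> n"
    and "card (UNIV :: 'a set) = q ^ (2 * n)"
    and "is_basis q n \<xi>"
  defines "P \<equiv> {a :: nat \<Rightarrow> 'a. a 0 \<in> subfield_of_order (q ^ n)}"
  shows "(\<forall>a\<in>P. hermitian_form q (Hform q n d a))
       \<and> d_code n q d ((\<lambda>a. form_matrix n \<xi> (Hform q n d a)) ` P)
       \<and> additive_code n ((\<lambda>a. form_matrix n \<xi> (Hform q n d a)) ` P)
       \<and> card ((\<lambda>a. form_matrix n \<xi> (Hform q n d a)) ` P) = q ^ (n * (n - d + 1))"
proof -
  interpret Hform_family q n "TYPE('a)" d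
    using assms(1-6) by unfold_locales (auto elim: oddE)
  show ?thesis
    unfolding P_def
    using hermitian_form_Hform d_code_gram_image[OF assms(7)] additive_code_gram_image
      card_gram_image[OF assms(7)]
    by (simp add: subfield_of_order_def)
qed

end
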